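(* Let $f:\mathcal X^n\to\mathcal T$ with $\mathcal T$ finite, $\varepsilon>0$, and let $M$ be $L_{0,1}$-unbiased and $\varepsilon$-differentially private, where $L_{0,1}(s,t)=\mathbf 1\{s\ne t\}$. Then for every $x\in\mathcal X^n$ and $t\in\mathcal T$, $$\mathbb P(M(x)=t)\ge e^{-2\,\mathrm{len}_f(x;t)\varepsilon}\,\mathbb P(M(x)=f(x)).$$
   Context: $d_H$ is the Hamming distance on $\mathcal X^n$; neighboring means $d_H\le1$. $M$ is $\varepsilon$-differentially private if $\mathbb P(M(x)\in S)\le e^\varepsilon\mathbb P(M(x')\in S)$ for all neighboring $x,x'$ and all $S$. $M$ is $L$-unbiased if $\mathbb E[L(M(x),f(x))]\le\mathbb E[L(M(x),t)]$ for all $x,t$; for $L_{0,1}$ this means $\mathbb P(M(x)=f(x))\ge\mathbb P(M(x)=t)$. The inverse sensitivity is $\mathrm{len}_f(x;t)=\inf\{d_H(x,x'):f(x')=t\}$ with $\inf\emptyset=+\infty$ and $e^{-\infty}=0$. *)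

theory Defs
  imports "HOL-Probability.Probability"
begin

text \<open>Datasets in X^n are lists of length n; Hamming distance counts differing positions.\<close>
definition hamming :: "'x list \<Rightarrow> 'x list \<Rightarrow> nat" where
  "hamming xs ys = card {i. i < length xs \<and> i < length ys \<and> xs ! i \<noteq> ys ! i}"

definition diff_private :: "nat \<Rightarrow> real \<Rightarrow> ('x list \<Rightarrow> 't pmf) \<Rightarrow> bool" where
  "diff_private n \<epsilon> M \<longleftrightarrow>
     (\<forall>x x' S. length x = n \<longrightarrow> length x' = n \<longrightarrow> hamming x x' \<le> 1 \<longrightarrow>
        measure_pmf.prob (M x) S \<le> exp \<epsilon> * measure_pmf.prob (M x') S)"

definition unbiased :: "nat \<Rightarrow> ('t \<Rightarrow> 't \<Rightarrow> real) \<Rightarrow> ('x list \<Rightarrow> 't) \<Rightarrow> ('x list \<Rightarrow> 't pmf) \<Rightarrow> bool" where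
  "unbiased n L f M \<longleftrightarrow>
     (\<forall>x t. length x = n \<longrightarrow>
        measure_pmf.expectation (M x) (\<lambda>s. L s (f x)) \<le> measure_pmf.expectation (M x) (\<lambda>s. L s t))"

definition L01 :: "'t \<Rightarrow> 't \<Rightarrow> real" where
  "L01 s t = (if s \<noteq> t then 1 else 0)"

text \<open>Inverse sensitivity; infimum of the empty set is \<infinity>.\<close>
definition inv_sens :: "nat \<Rightarrow> ('x list \<Rightarrow> 't) \<Rightarrow> 'x list \<Rightarrow> 't \<Rightarrow> enat" where
  "inv_sens n f x t = Inf {enat (hamming x x') | x'. length x' = n \<and> f x' = t}"

definition exp_neg :: "real \<Rightarrow> enat \<Rightarrow> real" where
  "exp_neg c k = (case k of enat m \<Rightarrow> exp (- c * real m) | \<infinity> \<Rightarrow> 0)"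

end

theory Submission
  imports Defs
begin

text \<open>Unbiasedness for the 0-1 loss says that f x is a mode of M x. Walking from x to a dataset
  x' with f x' = t along len_f(x;t) neighbouring steps changes every probability by at most a
  factor e^\<epsilon> per step (group privacy), so
  P(M x = f x) \<le> e^{k\<epsilon>} P(M x' = f x) \<le> e^{k\<epsilon>} P(M x' = t) \<le> e^{2k\<epsilon>} P(M x = t),
  where the middle step is the mode property at x'.\<close>

lemma expectation_L01: "measure_pmf.expectation p (\<lambda>s. L01 s t) = 1 - pmf p t"
proof -
  have "(\<lambda>s. L01 s t) = indicator (space (measure_pmf p) - {t})"
    by (auto simp: L01_def fun_eq_iff indicator_def)
  hence "measure_pmf.expectation p (\<lambda>s. L01 s t) = measure_pmf.prob p (space (measure_pmf p) - {t})"
    by simp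
  also have "\<dots> = 1 - measure_pmf.prob p {t}"
    by (rule measure_pmf.prob_compl) simp
  finally show ?thesis by (simp add: measure_pmf_single)
qed

lemma unbiased_L01_pmf_le:
  assumes "unbiased n L01 f M" "length x = n"
  shows "pmf (M x) t \<le> pmf (M x) (f x)"
  using assms unfolding unbiased_def by (auto simp: expectation_L01)

lemma hamming_commute: "hamming xs ys = hamming ys xs"
  unfolding hamming_def by (rule arg_cong[where f = card]) auto

lemma hamming_eq_0_iff:
  assumes "length xs = length ys"
  shows "hamming xs ys = 0 \<longleftrightarrow> xs = ys"
  using assms by (auto simp: hamming_def card_eq_0_iff intro: nth_equalityI)

lemma hamming_Suc_step:
  assumes "hamming xs ys = Suc k"
  obtains zs where "length zs = length xs" "hamming zs xs \<le> 1" "hamming zs ys = k"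
proof -
  define D where "D = {i. i < length xs \<and> i < length ys \<and> xs ! i \<noteq> ys ! i}"
  have card_D: "card D = Suc k"
    using assms unfolding hamming_def D_def .
  then obtain i where i: "i \<in> D"
    by (metis card.empty ex_in_conv nat.distinct(1))
  define zs where "zs = xs[i := ys ! i]"
  have "{j. j < length zs \<and> j < length ys \<and> zs ! j \<noteq> ys ! j} = D - {i}"
    using i unfolding D_def zs_def by (auto simp: nth_list_update)
  hence "hamming zs ys = k"
    using card_D i unfolding hamming_def D_def by simp
  moreover have "{j. j < length zs \<and> j < length xs \<and> zs ! j \<noteq> xs ! j} \<subseteq> {i}"
    unfolding zs_def by (auto, metis nth_list_update_neq)
  hence "hamming zs xs \<le> 1"
    unfolding hamming_def using card_mono[of "{i}"] by fastforce
  ultimately show thesis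
    using that[of zs] by (simp add: zs_def)
qed

lemma diff_private_pmf_le:
  assumes "diff_private n \<epsilon> M" "length x = n" "length x' = n" "hamming x x' \<le> 1"
  shows "pmf (M x) s \<le> exp \<epsilon> * pmf (M x') s"
proof -
  have "measure_pmf.prob (M x) {s} \<le> exp \<epsilon> * measure_pmf.prob (M x') {s}"
    using assms unfolding diff_private_def by blast
  thus ?thesis
    by (simp add: measure_pmf_single)
qed

lemma diff_private_group:
  assumes dp: "diff_private n \<epsilon> M" and "length x = n" "length x' = n"
  shows "pmf (M x') s \<le> exp (real (hamming x x') * \<epsilon>) * pmf (M x) s"
  using assms(2)
proof (induction "hamming x x'" arbitrary: x)
  case 0
  thus ?case using assms(3) hamming_eq_0_iff[of x x'] by simp
next
  case (Suc k)
  have "hamming x x' = Suc k"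
    using Suc.hyps(2) by simp
  then obtain y where y: "length y = length x" "hamming y x \<le> 1" "hamming y x' = k"
    by (rule hamming_Suc_step)
  have "pmf (M x') s \<le> exp (real k * \<epsilon>) * pmf (M y) s"
    using Suc.hyps(1)[OF y(3)[symmetric]] y Suc.prems by simp
  also have "\<dots> \<le> exp (real k * \<epsilon>) * (exp \<epsilon> * pmf (M x) s)"
    using diff_private_pmf_le[OF dp _ Suc.prems y(2)] y(1) Suc.prems by simp
  also have "\<dots> = exp (real (Suc k) * \<epsilon>) * pmf (M x) s"
    by (simp add: algebra_simps exp_add[symmetric])
  finally show ?case
    by (simp only: \<open>hamming x x' = Suc k\<close>)
qed

lemma inv_sens_infinity:
  assumes "\<nexists>x'. length x' = n \<and> f x' = t"
  shows "inv_sens n f x t = \<infinity>"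
proof -
  have "{enat (hamming x x') | x'. length x' = n \<and> f x' = t} = {}"
    using assms by blast
  thus ?thesis
    unfolding inv_sens_def by (simp only: Inf_empty top_enat_def)
qed

lemma inv_sens_attained:
  assumes "\<exists>x'. length x' = n \<and> f x' = t"
  obtains x' where "length x' = n" "f x' = t" "inv_sens n f x t = enat (hamming x x')"
proof -
  let ?S = "{enat (hamming x x') | x'. length x' = n \<and> f x' = t}"
  obtain x0 where "length x0 = n" "f x0 = t"
    using assms by blast
  hence "Inf ?S \<in> ?S"
    by (intro wellorder_InfI[of "enat (hamming x x0)"]) blast
  then obtain x' where "length x' = n" "f x' = t" "Inf ?S = enat (hamming x x')"
    by auto
  with that show thesis
    unfolding inv_sens_def by blast
qed

theorem lemmaA1:
  fixes n :: nat and f :: "'x list \<Rightarrow> 't::finite" and M :: "'x list \<Rightarrow> 't pmf"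
    and \<epsilon> :: real
  assumes "\<epsilon> > 0"
    and "unbiased n L01 f M"
    and "diff_private n \<epsilon> M"
    and "length x = n"
  shows "pmf (M x) t \<ge> exp_neg (2 * \<epsilon>) (inv_sens n f x t) * pmf (M x) (f x)"
proof (cases "\<exists>x'. length x' = n \<and> f x' = t")
  case False
  thus ?thesis by (simp add: inv_sens_infinity exp_neg_def)
next
  case True
  then obtain x' where x': "length x' = n" "f x' = t" and k: "inv_sens n f x t = enat (hamming x x')"
    by (rule inv_sens_attained)
  define c where "c = exp (real (hamming x x') * \<epsilon>)"
  define e where "e = exp_neg (2 * \<epsilon>) (inv_sens n f x t)"
  have "pmf (M x) (f x) \<le> c * pmf (M x') (f x)"
    using diff_private_group[OF assms(3) x'(1) assms(4)] hamming_commute[of x' x] by (simp only: c_def)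
  also have "\<dots> \<le> c * pmf (M x') t"
    using unbiased_L01_pmf_le[OF assms(2) x'(1)] x'(2) by (simp add: c_def)
  also have "\<dots> \<le> c * (c * pmf (M x) t)"
    using diff_private_group[OF assms(3) assms(4) x'(1)] by (simp add: c_def)
  finally have "e * pmf (M x) (f x) \<le> e * (c * (c * pmf (M x) t))"
    by (rule mult_left_mono) (simp add: e_def k exp_neg_def)
  also have "e * (c * (c * pmf (M x) t)) = (e * c * c) * pmf (M x) t"
    by (simp only: mult.assoc)
  also have "e * c * c = 1"
    by (simp add: e_def c_def k exp_neg_def flip: exp_add)
  finally show ?thesis
    by (simp add: e_def)
qed

end
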